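(* There exist constants $a,b>0$ such that for every integer $R\ge2$, $$\frac{a}{R}<\pi-\Vert T_R\Vert<\frac{b\log R}{R}.$$
   Context: $T_R$ is the $R\times R$ matrix with $(T_R)_{m,n}=0$ if $m=n$ and $(T_R)_{m,n}=\frac{1}{m-n}$ if $m\ne n$, $1\le m,n\le R$. $\Vert\cdot\Vert$ is the operator norm induced by the Euclidean norm on $\mathbb{C}^R$. *)

theory Defs
  imports "HOL-Analysis.Analysis"
begin

definition T_entry :: "nat \<Rightarrow> nat \<Rightarrow> complex" where
  "T_entry m n = (if m = n then 0 else complex_of_real (1 / (real m - real n)))"

text \<open>Euclidean norm of a vector in C^R, represented as a function on the indices 1..R.\<close>
definition vec_norm2 :: "nat \<Rightarrow> (nat \<Rightarrow> complex) \<Rightarrow> real" where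
  "vec_norm2 R x = sqrt (\<Sum>n=1..R. (cmod (x n))^2)"

definition T_apply :: "nat \<Rightarrow> (nat \<Rightarrow> complex) \<Rightarrow> (nat \<Rightarrow> complex)" where
  "T_apply R x = (\<lambda>m. \<Sum>n=1..R. T_entry m n * x n)"

definition T_opnorm :: "nat \<Rightarrow> real" where
  "T_opnorm R = Sup {vec_norm2 R (T_apply R x) | x. vec_norm2 R x = 1}"

end

theory Submission
  imports Defs "HOL-Computational_Algebra.Polynomial"
begin

text \<open>
  The matrix T_R is compared with the R x R corner of the N x N circulant matrix C_N
  whose symbol is the discrete Hilbert multiplier \<open>i\<pi>(1 - 2j/N)\<close> (and 0 at j = 0);
  its entries are \<open>(\<pi>/N) cot(\<pi>(m-n)/N)\<close>, which differ from \<open>1/(m-n)\<close> by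
  \<open>O(R/N\<^sup>2)\<close>. Taking \<open>N = 16R\<^sup>2\<close> the error has norm at most \<open>\<pi>/(16R)\<close>.

  Upper bound: a vector supported on 1..R has DFT coefficients of size at most \<open>\<surd>R\<close> times
  its norm, so only a small part of its Fourier mass can sit near the frequencies 0 and N,
  where the symbol has modulus close to \<open>\<pi>\<close>; elsewhere its squared modulus is at most
  \<open>\<pi>\<^sup>2(1 - 1/(2R))\<close>, and Bessel's inequality gives \<open>\<parallel>C x\<parallel> \<le> \<pi>(1 - 1/(8R))\<parallel>x\<parallel>\<close>.

  Lower bound: with \<open>\<zeta> = exp(-2\<pi>is/N)\<close>, the coefficients of
  \<open>z (1 + \<zeta>z + \<dots> + (\<zeta>z)\<^bsup>M-1\<^esup>)\<^sup>k\<close> form a vector whose Fourier mass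
  is concentrated on the frequencies 1..2s (a power of a Dirichlet kernel peaked at s), where
  the imaginary part of the symbol is at least \<open>\<pi>(1 - 4s/N)\<close>. Choosing \<open>Mk \<approx> R\<close>,
  \<open>s \<approx> N/M\<close> and \<open>k \<approx> 2 log\<^sub>2 R\<close> gives \<open>\<pi> - \<parallel>T_R\<parallel> = O(log R / R)\<close>.
\<close>

subsection \<open>Elementary trigonometric estimates\<close>

lemma sin_ge_cubic:
  fixes x :: real
  assumes "0 \<le> x"
  shows "x - x^3/6 \<le> sin x"
proof -
  have "\<bar>sin x - (\<Sum>m<3. sin_coeff m * x ^ m)\<bar> \<le> inverse (fact 3) * \<bar>x\<bar> ^ 3"
    by (rule Maclaurin_sin_bound)
  moreover have "(\<Sum>m<3. sin_coeff m * x ^ m) = x"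
    by (simp add: numeral_3_eq_3 sin_coeff_def)
  ultimately show ?thesis
    using assms by (simp add: fact_numeral abs_if split: if_splits)
qed

lemma sin_ge_five_sixths:
  fixes x :: real
  assumes "0 \<le> x" "x \<le> 1"
  shows "5/6 * x \<le> sin x"
proof -
  have "x * x \<le> 1"
    using assms by (simp add: mult_le_one)
  then have "x^3 \<le> x"
    using mult_left_mono[of "x*x" 1 x] assms by (simp add: power3_eq_cube)
  then show ?thesis
    using sin_ge_cubic[OF assms(1)] by simp
qed

lemma cos_ge_quadratic: "1 - x^2/2 \<le> cos (x::real)"
proof -
  have "cos x = 1 - 2 * (sin (x/2))^2"
    using cos_double_sin[of "x/2"] by simp
  moreover have "(sin (x/2))^2 \<le> (x/2)^2"
    by (metis abs_ge_zero abs_sin_x_le_abs_x power2_abs power_mono)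
  ultimately show ?thesis
    by (simp add: power_divide)
qed

lemma abs_cot_minus_inverse_le_pos:
  fixes b :: real
  assumes "0 < b" "b \<le> 1"
  shows "\<bar>cot b - 1/b\<bar> \<le> b"
proof -
  have sin_lower: "b - b^3/6 \<le> sin b"
    using assms sin_ge_cubic by simp
  have sin_pos: "5/6 * b \<le> sin b" "0 < sin b"
    using sin_ge_five_sixths[of b] assms by auto
  have "b * cos b \<le> b"
    using assms by (simp add: mult_le_cancel_left1)
  then have upper: "b * cos b - sin b \<le> b^3/6"
    using sin_lower by simp
  have "b * (1 - b^2/2) \<le> b * cos b"
    using cos_ge_quadratic assms by (simp add: mult_left_mono)
  then have lower: "- (b^3/2) \<le> b * cos b - sin b"
    using sin_x_le_x[of b] assms by (simp add: algebra_simps power3_eq_cube power2_eq_square)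
  have numerator: "\<bar>b * cos b - sin b\<bar> \<le> b^3/2"
    using upper lower zero_le_power[of b 3] assms unfolding abs_le_iff by linarith
  have denominator: "5/6 * b^2 \<le> b * sin b"
    using sin_pos assms by (simp add: power2_eq_square mult_left_mono)
  have "\<bar>cot b - 1/b\<bar> = \<bar>b * cos b - sin b\<bar> / (b * sin b)"
    using sin_pos assms by (simp add: cot_def field_simps abs_divide)
  also have "\<dots> \<le> (b^3/2) / (5/6 * b^2)"
    using numerator denominator assms by (intro frac_le) auto
  also have "\<dots> \<le> b"
    using assms by (simp add: power2_eq_square power3_eq_cube field_simps)
  finally show ?thesis .
qed

lemma abs_cot_minus_inverse_le:
  fixes b :: real
  assumes "b \<noteq> 0" "\<bar>b\<bar> \<le> 1"
  shows "\<bar>cot b - 1/b\<bar> \<le> \<bar>b\<bar>"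
proof (cases "b > 0")
  case True
  then show ?thesis
    using abs_cot_minus_inverse_le_pos assms by auto
next
  case False
  then have "\<bar>cot (-b) - 1/(-b)\<bar> \<le> -b"
    using abs_cot_minus_inverse_le_pos[of "-b"] assms by auto
  then show ?thesis
    using False by (simp add: abs_minus_commute)
qed

lemma cis_double_minus_1: "cis (2*a) - 1 = cis a * (2 * \<i> * of_real (sin a))"
proof -
  have "cis (2*a) = Complex (1 - 2 * (sin a)^2) (2 * sin a * cos a)"
    by (simp add: complex_eq_iff cos_double_sin sin_double)
  then show ?thesis
    by (simp add: complex_eq_iff power2_eq_square algebra_simps)
qed

lemma cis_double_plus_1: "cis (2*a) + 1 = cis a * of_real (2 * cos a)"
proof -
  have "cis (2*a) = Complex (2 * (cos a)^2 - 1) (2 * sin a * cos a)"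
    by (simp add: complex_eq_iff cos_double_cos sin_double)
  then show ?thesis
    by (simp add: complex_eq_iff power2_eq_square algebra_simps)
qed

lemma norm_cis_double_minus_1: "cmod (cis (2*a) - 1) = 2 * \<bar>sin a\<bar>"
  by (simp add: cis_double_minus_1 norm_mult)

lemma cis_double_cot:
  assumes "sin a \<noteq> 0"
  shows "\<i> * (cis (2*a) + 1) / (cis (2*a) - 1) = of_real (cot a)"
  unfolding cis_double_minus_1 cis_double_plus_1 cot_def using assms
  by (simp add: field_simps cis_neq_zero)

lemma cis_2pi_ne_1:
  fixes t :: real
  assumes "t \<noteq> 0" "\<bar>t\<bar> < 1"
  shows "cis (2*pi*t) \<noteq> 1"
proof
  assume "cis (2*pi*t) = 1"
  then have "cos (2*pi*t) = 1"
    by (metis Re_complex_of_real cis.sel(1) of_real_1)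
  then obtain i :: int where "2*pi*t = real_of_int i * 2 * pi"
    using cos_one_2pi_int by blast
  then have "t = real_of_int i"
    by simp
  with assms show False
    by (cases "i = 0") auto
qed

subsection \<open>Roots of unity and the discrete Fourier transform\<close>

definition unit_root :: "nat \<Rightarrow> nat \<Rightarrow> complex" where
  "unit_root N k = cis (2*pi*real k/real N)"

definition dft :: "nat \<Rightarrow> nat \<Rightarrow> (nat \<Rightarrow> complex) \<Rightarrow> nat \<Rightarrow> complex" where
  "dft N R x j = (\<Sum>n=1..R. x n * unit_root N (j*n))"

lemma unit_root_power: "unit_root N j ^ n = unit_root N (j*n)"
  unfolding unit_root_def Complex.DeMoivre by (rule arg_cong[where f=cis]) (simp add: field_simps)

lemma norm_unit_root [simp]: "cmod (unit_root N k) = 1"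
  by (simp add: unit_root_def)

lemma unit_root_times_cnj:
  assumes "N > 0"
  shows "unit_root N (j*n) * cnj (unit_root N (j*m)) = cis (2*pi*((real n - real m)/real N)) ^ j"
  unfolding unit_root_def cis_cnj Complex.DeMoivre cis_mult
  by (rule arg_cong[where f=cis]) (use assms in \<open>simp add: field_simps\<close>)

lemma cis_2pi_diff_power_N:
  assumes "N > 0"
  shows "cis (2*pi*((real n - real m)/real N)) ^ N = 1"
proof -
  have "real N * (2*pi*((real n - real m)/real N)) = 2*pi*(real_of_int (int n - int m))"
    using assms by simp
  then have "cis (2*pi*((real n - real m)/real N)) ^ N = cis (2*pi*(real_of_int (int n - int m)))"
    unfolding Complex.DeMoivre by simp
  also have "\<dots> = 1"
    by (rule cis_multiple_2pi) simp
  finally show ?thesis .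
qed

lemma cis_2pi_diff_ne_1:
  assumes "m < N" "n < N" "m \<noteq> n"
  shows "cis (2*pi*((real n - real m)/real N)) \<noteq> 1"
  by (rule cis_2pi_ne_1) (use assms in \<open>auto simp: abs_less_iff field_simps\<close>)

lemma unit_root_orthogonality:
  assumes "m < N" "n < N"
  shows "(\<Sum>j<N. unit_root N (j*n) * cnj (unit_root N (j*m))) = (if n = m then of_nat N else 0)"
proof -
  define z where "z = cis (2*pi*((real n - real m)/real N))"
  have "N > 0"
    using assms by auto
  then have terms: "unit_root N (j*n) * cnj (unit_root N (j*m)) = z ^ j" for j
    unfolding z_def by (rule unit_root_times_cnj)
  show ?thesis
  proof (cases "n = m")
    case True
    then show ?thesis
      using terms by (simp add: z_def)
  next
    case False
    then have "z \<noteq> 1" "z ^ N = 1"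
      unfolding z_def using assms \<open>N > 0\<close> cis_2pi_diff_ne_1 cis_2pi_diff_power_N by auto
    then have "(\<Sum>j<N. z ^ j) = 0"
      by (simp add: geometric_sum)
    then show ?thesis
      using False terms by simp
  qed
qed

lemma sum_times_cnj_sum: "(\<Sum>j\<in>A. f j) * cnj (\<Sum>j\<in>A. f j) = (\<Sum>j\<in>A. \<Sum>j'\<in>A. f j * cnj (f j'))"
  by (simp add: sum_product cnj_sum)

lemma sum_swap_outer:
  fixes g :: "'a \<Rightarrow> 'b \<Rightarrow> 'd::comm_semiring_1"
  shows "(\<Sum>m\<in>M. \<Sum>j\<in>J. \<Sum>j'\<in>J'. g j j' * f j j' m) = (\<Sum>j\<in>J. \<Sum>j'\<in>J'. g j j' * (\<Sum>m\<in>M. f j j' m))"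
proof -
  have "(\<Sum>m\<in>M. \<Sum>j\<in>J. \<Sum>j'\<in>J'. g j j' * f j j' m) = (\<Sum>j\<in>J. \<Sum>m\<in>M. \<Sum>j'\<in>J'. g j j' * f j j' m)"
    by (rule sum.swap)
  also have "\<dots> = (\<Sum>j\<in>J. \<Sum>j'\<in>J'. \<Sum>m\<in>M. g j j' * f j j' m)"
    by (rule sum.cong[OF refl]) (rule sum.swap)
  finally show ?thesis
    by (simp add: sum_distrib_left)
qed

lemma parseval_dft:
  assumes "R < N"
  shows "(\<Sum>j<N. (cmod (dft N R x j))^2) = real N * (\<Sum>n=1..R. (cmod (x n))^2)"
proof -
  have "complex_of_real (\<Sum>j<N. (cmod (dft N R x j))^2) = (\<Sum>j<N. dft N R x j * cnj (dft N R x j))"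
    by (simp only: of_real_sum complex_norm_square)
  also have "\<dots> = (\<Sum>j<N. \<Sum>n=1..R. \<Sum>n'=1..R.
      x n * cnj (x n') * (unit_root N (j*n) * cnj (unit_root N (j*n'))))"
    unfolding dft_def sum_times_cnj_sum by (simp add: algebra_simps)
  also have "\<dots> = (\<Sum>n=1..R. \<Sum>n'=1..R.
      x n * cnj (x n') * (\<Sum>j<N. unit_root N (j*n) * cnj (unit_root N (j*n'))))"
    by (rule sum_swap_outer)
  also have "\<dots> = (\<Sum>n=1..R. \<Sum>n'=1..R. x n * cnj (x n') * (if n = n' then of_nat N else 0))"
    by (intro sum.cong refl, subst unit_root_orthogonality) (use assms in auto)
  also have "\<dots> = complex_of_real (real N * (\<Sum>n=1..R. (cmod (x n))^2))"
    unfolding of_real_mult of_real_sum complex_norm_square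
    by (simp add: if_distrib sum.delta sum_distrib_left mult.commute cong: if_cong)
  finally show ?thesis
    by (simp only: of_real_eq_iff)
qed

lemma parseval_inverse_dft:
  assumes "0 < N"
  shows "(\<Sum>m<N. (cmod ((1/of_nat N) * (\<Sum>j<N. Y j * cnj (unit_root N (j*m)))))^2)
         = (1/real N) * (\<Sum>j<N. (cmod (Y j))^2)"
proof -
  let ?c = "1 / complex_of_nat N"
  have square_sum: "(\<Sum>j<N. Y j * cnj (unit_root N (j*m))) * cnj (\<Sum>j<N. Y j * cnj (unit_root N (j*m)))
      = (\<Sum>j<N. \<Sum>j'<N. Y j * cnj (Y j') * (unit_root N (m*j') * cnj (unit_root N (m*j))))" for m
    unfolding sum_times_cnj_sum by (simp add: mult_ac)
  have "complex_of_real (\<Sum>m<N. (cmod (?c * (\<Sum>j<N. Y j * cnj (unit_root N (j*m)))))^2)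
      = (\<Sum>m<N. ?c * cnj ?c * ((\<Sum>j<N. Y j * cnj (unit_root N (j*m)))
           * cnj (\<Sum>j<N. Y j * cnj (unit_root N (j*m)))))"
    by (simp only: of_real_sum complex_norm_square complex_cnj_mult mult_ac)
  also have "\<dots> = ?c * cnj ?c * (\<Sum>j<N. \<Sum>j'<N. Y j * cnj (Y j') *
      (\<Sum>m<N. unit_root N (m*j') * cnj (unit_root N (m*j))))"
    by (simp only: square_sum sum_distrib_left[symmetric] sum_swap_outer)
  also have "\<dots> = ?c * cnj ?c * (\<Sum>j<N. \<Sum>j'<N. Y j * cnj (Y j') * (if j' = j then of_nat N else 0))"
    by (intro arg_cong[where f="\<lambda>t. ?c * cnj ?c * t"] sum.cong refl, subst unit_root_orthogonality)
      auto
  also have "\<dots> = complex_of_real ((1/real N) * (\<Sum>j<N. (cmod (Y j))^2))"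
    unfolding of_real_mult of_real_sum complex_norm_square using assms
    by (simp add: if_distrib sum.delta sum_distrib_left power2_eq_square mult_ac cong: if_cong)
  finally show ?thesis
    by (simp only: of_real_eq_iff)
qed

lemma bessel_inverse_dft:
  assumes "R < N"
  shows "(\<Sum>m=1..R. (cmod ((1/of_nat N) * (\<Sum>j<N. Y j * cnj (unit_root N (j*m)))))^2)
         \<le> (1/real N) * (\<Sum>j<N. (cmod (Y j))^2)"
proof -
  have "(\<Sum>m=1..R. (cmod ((1/of_nat N) * (\<Sum>j<N. Y j * cnj (unit_root N (j*m)))))^2)
     \<le> (\<Sum>m<N. (cmod ((1/of_nat N) * (\<Sum>j<N. Y j * cnj (unit_root N (j*m)))))^2)"
    by (rule sum_mono2) (use assms in auto)
  also have "\<dots> = (1/real N) * (\<Sum>j<N. (cmod (Y j))^2)"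
    by (rule parseval_inverse_dft) (use assms in auto)
  finally show ?thesis .
qed

subsection \<open>The circulant cotangent kernel\<close>

definition hilbert_symbol :: "nat \<Rightarrow> nat \<Rightarrow> complex" where
  "hilbert_symbol N j = (if j = 0 then 0 else \<i> * of_real (pi * (real N - 2*real j)/real N))"

definition cot_kernel :: "nat \<Rightarrow> nat \<Rightarrow> nat \<Rightarrow> complex" where
  "cot_kernel N m n =
     (1/of_nat N) * (\<Sum>j<N. hilbert_symbol N j * (unit_root N (j*n) * cnj (unit_root N (j*m))))"

lemma weighted_geometric_sum:
  fixes z :: complex
  assumes "z ^ N = 1" "z \<noteq> 1"
  shows "(\<Sum>j<N. of_nat j * z^j) = of_nat N / (z - 1)"
proof -
  have telescope: "(1 - z) * (\<Sum>j<n. of_nat j * z^j) + 1 + of_nat n * z^n = (\<Sum>j<Suc n. z^j)" for n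
    by (induction n) (simp_all add: algebra_simps)
  have "(\<Sum>j<Suc N. z^j) = 1"
    using assms by (simp add: geometric_sum)
  then have "(z - 1) * (\<Sum>j<N. of_nat j * z^j) = of_nat N"
    using telescope[of N] assms(1) by (simp add: algebra_simps)
  then show ?thesis
    using assms(2) by (simp add: field_simps)
qed

lemma sum_hilbert_symbol_power:
  assumes "N > 0"
  shows "(\<Sum>j<N. hilbert_symbol N j * z^j) =
    \<i> * of_real pi / of_nat N * (of_nat N * (\<Sum>j<N. z^j) - 2 * (\<Sum>j<N. of_nat j * z^j)) - \<i> * of_real pi"
proof -
  let ?K = "\<i> * of_real pi / of_nat N :: complex"
  have symbol: "hilbert_symbol N j = ?K * (of_nat N - 2 * of_nat j) - (if j = 0 then \<i> * of_real pi else 0)"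
    for j
    using assms by (simp add: hilbert_symbol_def field_simps)
  have "(\<Sum>j<N. hilbert_symbol N j * z^j) =
      (\<Sum>j<N. ?K * (of_nat N * z^j) - ?K * (2 * (of_nat j * z^j)) - (if j = 0 then \<i> * of_real pi else 0))"
    by (rule sum.cong[OF refl]) (simp add: symbol algebra_simps)
  also have "\<dots> = ?K * (of_nat N * (\<Sum>j<N. z^j) - 2 * (\<Sum>j<N. of_nat j * z^j)) - \<i> * of_real pi"
    using assms by (simp add: sum_subtractf sum_distrib_left right_diff_distrib)
  finally show ?thesis .
qed

lemma cot_kernel_diag:
  assumes "N > 0"
  shows "cot_kernel N m m = 0"
proof -
  have gauss: "2 * (\<Sum>j<n. (of_nat j :: complex)) = of_nat n * (of_nat n - 1)" for n
    by (induction n) (simp_all add: algebra_simps)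
  have "(\<Sum>j<N. hilbert_symbol N j * (unit_root N (j*m) * cnj (unit_root N (j*m))))
      = (\<Sum>j<N. hilbert_symbol N j * 1^j)"
    by (simp add: unit_root_times_cnj[OF assms])
  also have "\<dots> = 0"
    using assms by (subst sum_hilbert_symbol_power) (simp_all add: gauss field_simps)
  finally show ?thesis
    by (simp add: cot_kernel_def)
qed

lemma cot_kernel_off_diag:
  assumes "m < N" "n < N" "m \<noteq> n"
  shows "cot_kernel N m n = of_real (pi / real N * cot (pi * (real m - real n) / real N))"
proof -
  have N: "N > 0"
    using assms by auto
  define a where "a = pi * ((real n - real m) / real N)"
  define z where "z = cis (2*pi*((real n - real m)/real N))"
  have z_a: "z = cis (2*a)"
    by (simp add: z_def a_def mult.assoc)
  have z_ne_1: "z \<noteq> 1" and z_power: "z ^ N = 1"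
    unfolding z_def using cis_2pi_diff_ne_1[OF assms] cis_2pi_diff_power_N[OF N] by auto
  have "sin a \<noteq> 0"
  proof
    assume "sin a = 0"
    moreover have "\<bar>(real n - real m) / real N\<bar> < 1"
      using assms by (auto simp: abs_less_iff field_simps)
    then have "pi * \<bar>(real n - real m) / real N\<bar> < pi * 1"
      by (intro mult_strict_left_mono) auto
    then have "\<bar>a\<bar> < pi"
      by (simp add: a_def abs_mult)
    ultimately have "a = 0"
      using sin_zero_pi_iff by blast
    then show False
      using assms by (simp add: a_def)
  qed
  have "(\<Sum>j<N. hilbert_symbol N j * (unit_root N (j*n) * cnj (unit_root N (j*m))))
      = (\<Sum>j<N. hilbert_symbol N j * z^j)"
    by (simp add: unit_root_times_cnj[OF N] z_def)
  also have "\<dots> = - of_real pi * (\<i> * (z + 1) / (z - 1))"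
    unfolding sum_hilbert_symbol_power[OF N] weighted_geometric_sum[OF z_power z_ne_1]
    using z_power z_ne_1 N by (simp add: geometric_sum field_simps)
  also have "\<dots> = of_real (pi * cot (pi * (real m - real n) / real N))"
  proof -
    have "a = - (pi * (real m - real n) / real N)"
      by (simp add: a_def minus_divide_left algebra_simps)
    then show ?thesis
      unfolding z_a cis_double_cot[OF \<open>sin a \<noteq> 0\<close>] by simp
  qed
  finally show ?thesis
    by (simp add: cot_kernel_def)
qed

lemma vec_norm2_L2_set: "vec_norm2 R x = L2_set (\<lambda>n. cmod (x n)) {1..R}"
  by (simp add: vec_norm2_def L2_set_def)

lemma vec_norm2_nonneg: "0 \<le> vec_norm2 R x"
  by (simp add: vec_norm2_L2_set)

lemma vec_norm2_sq: "(vec_norm2 R x)^2 = (\<Sum>n=1..R. (cmod (x n))^2)"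
  unfolding vec_norm2_def by (simp add: sum_nonneg)

lemma vec_norm2_triangle: "vec_norm2 R (\<lambda>m. f m + g m) \<le> vec_norm2 R f + vec_norm2 R g"
proof -
  have "L2_set (\<lambda>m. cmod (f m + g m)) {1..R} \<le> L2_set (\<lambda>m. cmod (f m) + cmod (g m)) {1..R}"
    by (rule L2_set_mono) (auto simp: norm_triangle_ineq)
  also have "\<dots> \<le> L2_set (\<lambda>m. cmod (f m)) {1..R} + L2_set (\<lambda>m. cmod (g m)) {1..R}"
    by (rule L2_set_triangle_ineq)
  finally show ?thesis
    by (simp add: vec_norm2_L2_set)
qed

lemma vec_norm2_scale: "vec_norm2 R (\<lambda>m. c * f m) = cmod c * vec_norm2 R f"
  unfolding vec_norm2_L2_set norm_mult by (rule L2_set_right_distrib[symmetric]) simp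

lemma sum_norm_le_sqrt_vec_norm2: "(\<Sum>n=1..R. cmod (x n)) \<le> sqrt (real R) * vec_norm2 R x"
  using L2_set_mult_ineq[of "\<lambda>n. cmod (x n)" "\<lambda>n. 1" "{1..R}"]
  by (simp add: vec_norm2_L2_set L2_set_constant mult.commute)

lemma norm_inner_le_vec_norm2: "cmod (\<Sum>m=1..R. f m * cnj (g m)) \<le> vec_norm2 R f * vec_norm2 R g"
proof -
  have "cmod (\<Sum>m=1..R. f m * cnj (g m)) \<le> (\<Sum>m=1..R. \<bar>cmod (f m)\<bar> * \<bar>cmod (g m)\<bar>)"
    by (rule order_trans[OF norm_sum]) (simp add: norm_mult)
  also have "\<dots> \<le> L2_set (\<lambda>m. cmod (f m)) {1..R} * L2_set (\<lambda>m. cmod (g m)) {1..R}"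
    by (rule L2_set_mult_ineq)
  finally show ?thesis
    by (simp add: vec_norm2_L2_set)
qed

lemma vec_norm2_matrix_apply_le:
  assumes "\<And>m n. m \<in> {1..R} \<Longrightarrow> n \<in> {1..R} \<Longrightarrow> cmod (A m n) \<le> d"
  shows "vec_norm2 R (\<lambda>m. \<Sum>n=1..R. A m n * x n) \<le> real R * d * vec_norm2 R x"
proof (cases "R = 0")
  case True
  then show ?thesis
    by (simp add: vec_norm2_def)
next
  case False
  then have "cmod (A 1 1) \<le> d"
    using assms by simp
  then have "0 \<le> d"
    using norm_ge_zero order_trans by blast
  have row: "cmod (\<Sum>n=1..R. A m n * x n) \<le> d * (sqrt (real R) * vec_norm2 R x)"
    if "m \<in> {1..R}" for m
  proof -
    have "cmod (\<Sum>n=1..R. A m n * x n) \<le> (\<Sum>n=1..R. cmod (A m n) * cmod (x n))"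
      by (rule order_trans[OF norm_sum]) (simp add: norm_mult)
    also have "\<dots> \<le> (\<Sum>n=1..R. d * cmod (x n))"
      by (rule sum_mono) (use assms that in \<open>auto intro: mult_right_mono\<close>)
    also have "\<dots> \<le> d * (sqrt (real R) * vec_norm2 R x)"
      unfolding sum_distrib_left[symmetric]
      by (rule mult_left_mono[OF sum_norm_le_sqrt_vec_norm2 \<open>0 \<le> d\<close>])
    finally show ?thesis .
  qed
  have "vec_norm2 R (\<lambda>m. \<Sum>n=1..R. A m n * x n) = L2_set (\<lambda>m. cmod (\<Sum>n=1..R. A m n * x n)) {1..R}"
    by (rule vec_norm2_L2_set)
  also have "\<dots> \<le> L2_set (\<lambda>m. d * (sqrt (real R) * vec_norm2 R x)) {1..R}"
    by (rule L2_set_mono) (use row in auto)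
  also have "\<dots> = real R * d * vec_norm2 R x"
    using \<open>0 \<le> d\<close> by (simp add: L2_set_constant vec_norm2_nonneg mult_ac)
  finally show ?thesis .
qed

lemma norm_dft_sq_le: "(cmod (dft N R x j))^2 \<le> real R * (vec_norm2 R x)^2"
proof -
  have "cmod (dft N R x j) \<le> (\<Sum>n=1..R. cmod (x n))"
    unfolding dft_def by (rule order_trans[OF norm_sum]) (simp add: norm_mult)
  also have "\<dots> \<le> sqrt (real R) * vec_norm2 R x"
    by (rule sum_norm_le_sqrt_vec_norm2)
  finally have "(cmod (dft N R x j))^2 \<le> (sqrt (real R) * vec_norm2 R x)^2"
    by (rule power_mono) simp
  then show ?thesis
    by (simp add: power_mult_distrib)
qed

lemma T_apply_scale: "T_apply R (\<lambda>n. c * x n) = (\<lambda>m. c * T_apply R x m)"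
  unfolding T_apply_def by (simp add: sum_distrib_left mult_ac)

subsection \<open>Comparison of T_R with the cotangent kernel\<close>

lemma T_apply_split:
  "T_apply R x m = (\<Sum>n=1..R. cot_kernel N m n * x n) + (\<Sum>n=1..R. (T_entry m n - cot_kernel N m n) * x n)"
  unfolding T_apply_def by (simp add: sum.distrib[symmetric] algebra_simps)

lemma norm_T_entry_minus_cot_kernel:
  assumes "R < N" "pi * real R \<le> real N" "m \<in> {1..R}" "n \<in> {1..R}"
  shows "cmod (T_entry m n - cot_kernel N m n) \<le> pi^2 * real R / (real N)^2"
proof (cases "m = n")
  case True
  then show ?thesis
    using assms by (simp add: T_entry_def cot_kernel_diag)
next
  case False
  have N: "N > 0"
    using assms by auto
  define b where "b = pi * (real m - real n) / real N"
  have dist: "\<bar>real m - real n\<bar> \<le> real R"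
    using assms by auto
  have abs_b: "\<bar>b\<bar> = pi * \<bar>real m - real n\<bar> / real N"
    by (simp add: b_def abs_mult)
  have "pi * \<bar>real m - real n\<bar> \<le> real N"
    using order_trans[OF mult_left_mono[OF dist, of pi] assms(2)] by simp
  then have "\<bar>b\<bar> \<le> 1"
    unfolding abs_b using N by (simp add: divide_le_eq)
  have "b \<noteq> 0"
    using False N by (simp add: b_def)
  have "T_entry m n - cot_kernel N m n = of_real (pi / real N * (1 / b - cot b))"
    using False N assms
    by (simp add: T_entry_def cot_kernel_off_diag b_def field_simps)
  then have "cmod (T_entry m n - cot_kernel N m n) = pi / real N * \<bar>cot b - 1/b\<bar>"
    by (simp only: norm_of_real) (simp add: abs_mult abs_minus_commute)
  also have "\<dots> \<le> pi / real N * \<bar>b\<bar>"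
    by (rule mult_left_mono[OF abs_cot_minus_inverse_le[OF \<open>b \<noteq> 0\<close> \<open>\<bar>b\<bar> \<le> 1\<close>]]) simp
  also have "\<dots> \<le> pi^2 * real R / (real N)^2"
    unfolding abs_b using dist N by (simp add: power2_eq_square field_simps mult_left_mono)
  finally show ?thesis .
qed

lemma vec_norm2_error_apply_le:
  assumes "R \<ge> 1" "N = 16*R^2"
  shows "vec_norm2 R (\<lambda>m. \<Sum>n=1..R. (T_entry m n - cot_kernel N m n) * x n) \<le> pi / (16 * real R) * vec_norm2 R x"
proof -
  have real_N: "real N = 16 * (real R)^2"
    using assms by simp
  have "R < N"
    using assms by (simp add: power2_eq_square)
  moreover have "pi * real R \<le> real N"
    using pi_less_4 assms mult_right_mono[of pi 16 "real R"]
    unfolding real_N by (simp add: power2_eq_square)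
  ultimately have "vec_norm2 R (\<lambda>m. \<Sum>n=1..R. (T_entry m n - cot_kernel N m n) * x n)
      \<le> real R * (pi^2 * real R / (real N)^2) * vec_norm2 R x"
    by (intro vec_norm2_matrix_apply_le norm_T_entry_minus_cot_kernel)
  also have "real R * (pi^2 * real R / (real N)^2) = pi / (16 * real R) * (pi / (16 * real R))"
    unfolding real_N using assms by (simp add: field_simps power2_eq_square)
  also have "\<dots> \<le> pi / (16 * real R)"
    using assms pi_less_4 by (intro mult_left_le) auto
  finally show ?thesis
    by (simp add: mult_right_mono vec_norm2_nonneg)
qed

lemma cot_kernel_apply_dft:
  "(\<Sum>n=1..R. cot_kernel N m n * x n)
     = (1/of_nat N) * (\<Sum>j<N. (hilbert_symbol N j * dft N R x j) * cnj (unit_root N (j*m)))"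
proof -
  have "(\<Sum>n=1..R. cot_kernel N m n * x n) = (1/of_nat N) *
      (\<Sum>n=1..R. \<Sum>j<N. x n * (hilbert_symbol N j * (unit_root N (j*n) * cnj (unit_root N (j*m)))))"
    unfolding cot_kernel_def by (simp add: sum_distrib_left sum_distrib_right mult_ac)
  also have "\<dots> = (1/of_nat N) *
      (\<Sum>j<N. \<Sum>n=1..R. x n * (hilbert_symbol N j * (unit_root N (j*n) * cnj (unit_root N (j*m)))))"
    by (subst sum.swap) (rule refl)
  also have "\<dots> = (1/of_nat N) * (\<Sum>j<N. (hilbert_symbol N j * dft N R x j) * cnj (unit_root N (j*m)))"
    unfolding dft_def by (simp add: sum_distrib_left sum_distrib_right mult_ac)
  finally show ?thesis .
qed

lemma cot_kernel_quadratic_form: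
  "(\<Sum>m=1..R. (\<Sum>n=1..R. cot_kernel N m n * x n) * cnj (x m))
     = (1/of_nat N) * (\<Sum>j<N. hilbert_symbol N j * of_real ((cmod (dft N R x j))^2))"
proof -
  have "(\<Sum>m=1..R. (\<Sum>n=1..R. cot_kernel N m n * x n) * cnj (x m)) = (1/of_nat N) *
      (\<Sum>m=1..R. \<Sum>j<N. (hilbert_symbol N j * dft N R x j) * (cnj (unit_root N (j*m)) * cnj (x m)))"
    unfolding cot_kernel_apply_dft by (simp only: sum_distrib_left sum_distrib_right mult.assoc)
  also have "\<dots> = (1/of_nat N) *
      (\<Sum>j<N. \<Sum>m=1..R. (hilbert_symbol N j * dft N R x j) * (cnj (unit_root N (j*m)) * cnj (x m)))"
    by (subst sum.swap) (rule refl)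
  also have "\<dots> = (1/of_nat N) * (\<Sum>j<N. (hilbert_symbol N j * dft N R x j) * cnj (dft N R x j))"
  proof -
    have "(\<Sum>m\<in>A. Y * (cnj (e m) * cnj (x m))) = Y * cnj (\<Sum>m\<in>A. x m * e m)" for Y A e
      by (simp add: cnj_sum sum_distrib_left mult_ac)
    then show ?thesis
      unfolding dft_def by (intro arg_cong[where f="\<lambda>t. _ * t"] sum.cong refl)
  qed
  also have "\<dots> = (1/of_nat N) * (\<Sum>j<N. hilbert_symbol N j * of_real ((cmod (dft N R x j))^2))"
    by (simp only: complex_norm_square mult.assoc)
  finally show ?thesis .
qed

subsection \<open>The upper bound\<close>

lemma norm_hilbert_symbol:
  assumes "j \<noteq> 0"
  shows "cmod (hilbert_symbol N j) = pi * \<bar>real N - 2*real j\<bar> / real N"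
proof -
  have "hilbert_symbol N j = \<i> * of_real (pi * (real N - 2*real j)/real N)"
    using assms by (simp add: hilbert_symbol_def)
  then show ?thesis
    by (simp only: norm_mult norm_ii norm_of_real) (simp add: abs_mult abs_divide)
qed

lemma norm_hilbert_symbol_sq_le:
  assumes "j < N" "0 < K" "2*K \<le> N"
  shows "(cmod (hilbert_symbol N j))^2
    \<le> pi^2 * (1 - 2*real K/real N) + (if j < K \<or> N < j + K then pi^2 * (2*real K/real N) else 0)"
proof (cases "j = 0")
  case True
  then show ?thesis
    using assms by (simp add: hilbert_symbol_def)
next
  case False
  have N: "real N > 0"
    using assms by simp
  have "(cmod (hilbert_symbol N j))^2 = pi^2 * (\<bar>real N - 2*real j\<bar> / real N)^2"
    using False by (simp add: norm_hilbert_symbol power_mult_distrib power_divide)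
  also have "\<dots> \<le> pi^2 * (if j < K \<or> N < j + K then 1 else 1 - 2*real K/real N)"
  proof (cases "j < K \<or> N < j + K")
    case True
    have "\<bar>real N - 2*real j\<bar> / real N \<le> 1"
      using assms N by (simp add: divide_le_eq)
    then have "(\<bar>real N - 2*real j\<bar> / real N)^2 \<le> 1"
      by (simp add: power_le_one_iff)
    then show ?thesis
      using True by simp
  next
    case False
    have "\<bar>real N - 2*real j\<bar> \<le> real N - 2*real K"
      using False by auto
    then have "\<bar>real N - 2*real j\<bar> / real N \<le> 1 - 2*real K/real N"
      using N by (simp add: field_simps)
    moreover have "\<bar>real N - 2*real j\<bar> / real N \<le> 1"
      using assms N by (simp add: divide_le_eq)
    moreover have "t^2 \<le> t" if "0 \<le> t" "t \<le> 1" for t :: real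
      using that by (simp add: power2_eq_square mult_left_le_one_le)
    ultimately have "(\<bar>real N - 2*real j\<bar> / real N)^2 \<le> 1 - 2*real K/real N"
      using N by (meson abs_ge_zero divide_nonneg_pos order_trans)
    then show ?thesis
      using False by simp
  qed
  also have "\<dots> = pi^2 * (1 - 2*real K/real N) + (if j < K \<or> N < j + K then pi^2 * (2*real K/real N) else 0)"
    by (simp add: algebra_simps)
  finally show ?thesis .
qed

lemma card_near_ends:
  assumes "2*K \<le> N"
  shows "card {j\<in>{..<N}. j < K \<or> N < j + K} \<le> 2*K"
proof -
  have "card {j\<in>{..<N}. j < K \<or> N < j + K} \<le> card ({..<K} \<union> {N-K<..<N})"
    by (rule card_mono) auto
  also have "\<dots> \<le> card {..<K} + card {N-K<..<N}"
    by (rule card_Un_le)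
  finally show ?thesis
    using assms by simp
qed

lemma norm_hilbert_symbol_dft_sq_le:
  assumes "R \<ge> 1" "N = 16*R^2" "j < N"
  shows "(cmod (hilbert_symbol N j * dft N R x j))^2
    \<le> pi^2 * (1 - 1/(2*real R)) * (cmod (dft N R x j))^2
      + pi^2 / (2*real R) * (if j < 4*R \<or> N < j + 4*R then real R * (vec_norm2 R x)^2 else 0)"
proof -
  define X where "X = (cmod (dft N R x j))^2"
  define near where "near \<longleftrightarrow> j < 4*R \<or> N < j + 4*R"
  define c where "c = pi^2 / (2*real R)"
  have ratio: "2 * real (4*R) / real N = 1 / (2 * real R)"
    using assms by (simp add: power2_eq_square field_simps)
  have "0 < 4*R" "2*(4*R) \<le> N"
    using assms by (simp_all add: power2_eq_square)
  from norm_hilbert_symbol_sq_le[OF assms(3) this]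
  have "(cmod (hilbert_symbol N j))^2
      \<le> pi^2 * (1 - 1/(2*real R)) + (if near then pi^2 * (1 / (2*real R)) else 0)"
    unfolding ratio near_def .
  then have "(cmod (hilbert_symbol N j))^2 \<le> pi^2 * (1 - 1/(2*real R)) + (if near then c else 0)"
    by (cases near) (simp_all add: c_def)
  then have "(cmod (hilbert_symbol N j))^2 * X \<le> (pi^2 * (1 - 1/(2*real R)) + (if near then c else 0)) * X"
    by (rule mult_right_mono) (simp add: X_def)
  moreover have "(cmod (hilbert_symbol N j * dft N R x j))^2 = (cmod (hilbert_symbol N j))^2 * X"
    by (simp add: X_def norm_mult power_mult_distrib)
  moreover have "c * X \<le> c * (real R * (vec_norm2 R x)^2)"
    by (rule mult_left_mono) (simp_all add: c_def X_def norm_dft_sq_le)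
  ultimately show ?thesis
    unfolding near_def[symmetric] X_def[symmetric] c_def[symmetric]
    by (cases near) (simp_all add: distrib_right)
qed

lemma vec_norm2_cot_kernel_apply_sq_le:
  assumes "R \<ge> 1" "N = 16*R^2"
  shows "(vec_norm2 R (\<lambda>m. \<Sum>n=1..R. cot_kernel N m n * x n))^2
    \<le> pi^2 * (1 - 1/(4*real R)) * (vec_norm2 R x)^2"
proof -
  define X where "X = dft N R x"
  define near where "near j \<longleftrightarrow> j < 4*R \<or> N < j + 4*R" for j
  define nx where "nx = (vec_norm2 R x)^2"
  have "R < N" "2*(4*R) \<le> N"
    using assms by (simp_all add: power2_eq_square)
  have "(vec_norm2 R (\<lambda>m. \<Sum>n=1..R. cot_kernel N m n * x n))^2
      = (\<Sum>m=1..R. (cmod ((1/of_nat N) * (\<Sum>j<N. (hilbert_symbol N j * X j) * cnj (unit_root N (j*m)))))^2)"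
    unfolding vec_norm2_sq cot_kernel_apply_dft X_def ..
  also have "\<dots> \<le> (1/real N) * (\<Sum>j<N. (cmod (hilbert_symbol N j * X j))^2)"
    by (rule bessel_inverse_dft[OF \<open>R < N\<close>])
  also have "\<dots> \<le> (1/real N) * (\<Sum>j<N. pi^2 * (1 - 1/(2*real R)) * (cmod (X j))^2
      + pi^2 / (2*real R) * (if near j then real R * nx else 0))"
    unfolding X_def near_def nx_def
    by (intro mult_left_mono sum_mono norm_hilbert_symbol_dft_sq_le[OF assms]) simp_all
  also have "\<dots> = (1/real N) * (pi^2 * (1 - 1/(2*real R)) * (real N * nx)
      + pi^2 / (2*real R) * (real (card {j\<in>{..<N}. near j}) * (real R * nx)))"
  proof -
    have "(\<Sum>j<N. if near j then real R * nx else 0) = real (card {j\<in>{..<N}. near j}) * (real R * nx)"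
      by (simp add: sum.inter_filter[symmetric])
    moreover have "(\<Sum>j<N. (cmod (X j))^2) = real N * nx"
      unfolding X_def nx_def vec_norm2_sq by (rule parseval_dft[OF \<open>R < N\<close>])
    ultimately show ?thesis
      by (simp only: sum.distrib sum_distrib_left[symmetric])
  qed
  also have "\<dots> \<le> (1/real N) * (pi^2 * (1 - 1/(2*real R)) * (real N * nx)
      + pi^2 / (2*real R) * (real (2*(4*R)) * (real R * nx)))"
    using card_near_ends[OF \<open>2*(4*R) \<le> N\<close>] unfolding near_def nx_def
    by (intro mult_left_mono add_left_mono mult_right_mono) auto
  also have "\<dots> = pi^2 * (1 - 1/(4*real R)) * nx"
    using assms by (simp add: field_simps power2_eq_square)
  finally show ?thesis
    unfolding nx_def .
qed

lemma vec_norm2_T_apply_le: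
  assumes "R \<ge> 1"
  shows "vec_norm2 R (T_apply R x) \<le> (pi - pi/(16*real R)) * vec_norm2 R x"
proof -
  define N where "N = 16*R^2"
  have "(vec_norm2 R (\<lambda>m. \<Sum>n=1..R. cot_kernel N m n * x n))^2
      \<le> pi^2 * (1 - 1/(4*real R)) * (vec_norm2 R x)^2"
    by (rule vec_norm2_cot_kernel_apply_sq_le[OF assms N_def])
  also have "\<dots> \<le> pi^2 * (1 - 1/(8*real R))^2 * (vec_norm2 R x)^2"
  proof -
    have "(1 - 1/(8*real R))^2 = 1 - 1/(4*real R) + (1/(8*real R))^2"
      by (simp add: power2_eq_square algebra_simps)
    then have "1 - 1/(4*real R) \<le> (1 - 1/(8*real R))^2"
      by simp
    then show ?thesis
      by (intro mult_right_mono mult_left_mono) simp_all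
  qed
  also have "\<dots> = (pi * (1 - 1/(8*real R)) * vec_norm2 R x)^2"
    by (simp add: power_mult_distrib)
  finally have "vec_norm2 R (\<lambda>m. \<Sum>n=1..R. cot_kernel N m n * x n) \<le> pi * (1 - 1/(8*real R)) * vec_norm2 R x"
  proof (rule power2_le_imp_le)
    have "1/(8*real R) \<le> 1"
      using assms by simp
    then show "0 \<le> pi * (1 - 1/(8*real R)) * vec_norm2 R x"
      by (intro mult_nonneg_nonneg vec_norm2_nonneg) simp_all
  qed
  moreover have "vec_norm2 R (T_apply R x) \<le> vec_norm2 R (\<lambda>m. \<Sum>n=1..R. cot_kernel N m n * x n)
      + vec_norm2 R (\<lambda>m. \<Sum>n=1..R. (T_entry m n - cot_kernel N m n) * x n)"
    unfolding T_apply_split[of R x _ N] by (rule vec_norm2_triangle)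
  moreover have "pi * (1 - 1/(8*real R)) * vec_norm2 R x + pi / (16 * real R) * vec_norm2 R x
      = (pi - pi/(16*real R)) * vec_norm2 R x"
    using assms by (simp add: field_simps)
  ultimately show ?thesis
    using vec_norm2_error_apply_le[OF assms N_def, of x] by linarith
qed

lemma exists_unit_vector:
  assumes "R \<ge> 1"
  shows "\<exists>x. vec_norm2 R x = 1"
proof
  define e where "e = (\<lambda>n::nat. if n = 1 then (1::complex) else 0)"
  have "(\<Sum>n=1..R. (cmod (e n))^2) = (\<Sum>n\<in>{1..R}. if n = 1 then 1 else 0)"
    by (rule sum.cong) (auto simp: e_def)
  then show "vec_norm2 R e = 1"
    using assms by (simp add: vec_norm2_def)
qed

lemma T_opnorm_le:
  assumes "R \<ge> 1" "\<And>x. vec_norm2 R (T_apply R x) \<le> c * vec_norm2 R x"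
  shows "T_opnorm R \<le> c"
  unfolding T_opnorm_def
proof (rule cSup_least)
  show "{vec_norm2 R (T_apply R x) | x. vec_norm2 R x = 1} \<noteq> {}"
    using exists_unit_vector[OF assms(1)] by blast
next
  fix z
  assume "z \<in> {vec_norm2 R (T_apply R x) | x. vec_norm2 R x = 1}"
  then obtain y where "z = vec_norm2 R (T_apply R y)" "vec_norm2 R y = 1"
    by blast
  then show "z \<le> c"
    using assms(2)[of y] by simp
qed

lemma T_apply_le_T_opnorm:
  assumes "R \<ge> 1"
  shows "vec_norm2 R (T_apply R x) \<le> T_opnorm R * vec_norm2 R x"
proof (cases "vec_norm2 R x = 0")
  case True
  then have "x n = 0" if "n \<in> {1..R}" for n
    using that by (simp add: vec_norm2_def sum_nonneg_eq_0_iff)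
  then show ?thesis
    by (simp add: T_apply_def vec_norm2_def)
next
  case False
  let ?y = "\<lambda>n. complex_of_real (1 / vec_norm2 R x) * x n"
  have "vec_norm2 R ?y = cmod (complex_of_real (1 / vec_norm2 R x)) * vec_norm2 R x"
    by (rule vec_norm2_scale)
  then have "vec_norm2 R ?y = 1"
    using False vec_norm2_nonneg[of R x] by (simp add: norm_divide)
  moreover have "0 \<le> pi/(16*real R)"
    by simp
  then have "vec_norm2 R (T_apply R z) \<le> pi" if "vec_norm2 R z = 1" for z
    using vec_norm2_T_apply_le[OF assms, of z] that \<open>0 \<le> pi/(16*real R)\<close>
    by (simp only: mult_1_right)
  then have "bdd_above {vec_norm2 R (T_apply R x) | x. vec_norm2 R x = 1}"
    by (intro bdd_aboveI[of _ pi]) blast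
  ultimately have "vec_norm2 R (T_apply R ?y) \<le> T_opnorm R"
    unfolding T_opnorm_def by (intro cSup_upper) auto
  moreover have "vec_norm2 R (T_apply R ?y) = vec_norm2 R (T_apply R x) / vec_norm2 R x"
    unfolding T_apply_scale vec_norm2_scale using vec_norm2_nonneg[of R x] by (simp add: norm_divide)
  ultimately show ?thesis
    using False vec_norm2_nonneg[of R x] by (simp add: divide_le_eq)
qed

lemma T_opnorm_nonneg:
  assumes "R \<ge> 1"
  shows "0 \<le> T_opnorm R"
proof -
  obtain x where "vec_norm2 R x = 1"
    using exists_unit_vector[OF assms] by blast
  then show ?thesis
    using T_apply_le_T_opnorm[OF assms, of x] vec_norm2_nonneg[of R "T_apply R x"] by simp
qed

lemma pi_minus_T_opnorm_ge:
  assumes "R \<ge> 1"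
  shows "pi/(16*real R) \<le> pi - T_opnorm R"
  using T_opnorm_le[OF assms vec_norm2_T_apply_le[OF assms]] by simp

subsection \<open>The lower bound\<close>

lemma Im_hilbert_symbol: "Im (hilbert_symbol N j) = (if j = 0 then 0 else pi * (real N - 2 * real j) / real N)"
  by (simp add: hilbert_symbol_def)

lemma T_quadratic_form_lower:
  assumes "R \<ge> 1" "N = 16*R^2"
  shows "(1/real N) * (\<Sum>j<N. Im (hilbert_symbol N j) * (cmod (dft N R x j))^2)
           - pi/(16*real R) * (vec_norm2 R x)^2
         \<le> vec_norm2 R (T_apply R x) * vec_norm2 R x"
proof -
  define S1 where "S1 = (\<Sum>m=1..R. (\<Sum>n=1..R. cot_kernel N m n * x n) * cnj (x m))"
  define S2 where "S2 = (\<Sum>m=1..R. (\<Sum>n=1..R. (T_entry m n - cot_kernel N m n) * x n) * cnj (x m))"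
  have "S1 + S2 = (\<Sum>m=1..R. T_apply R x m * cnj (x m))"
    unfolding S1_def S2_def T_apply_split[of R x _ N] by (simp add: distrib_right sum.distrib)
  then have "Im (S1 + S2) \<le> vec_norm2 R (T_apply R x) * vec_norm2 R x"
    using order_trans[OF abs_le_D1[OF abs_Im_le_cmod] norm_inner_le_vec_norm2] by simp
  moreover have "Im S1 = (1/real N) * (\<Sum>j<N. Im (hilbert_symbol N j) * (cmod (dft N R x j))^2)"
    unfolding S1_def cot_kernel_quadratic_form using assms
    by (simp add: Im_sum Im_divide power2_eq_square)
  moreover have "cmod S2 \<le> pi / (16 * real R) * vec_norm2 R x * vec_norm2 R x"
    unfolding S2_def
    by (rule order_trans[OF norm_inner_le_vec_norm2 mult_right_mono[OF vec_norm2_error_apply_le[OF assms]]])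
      (rule vec_norm2_nonneg)
  then have "- Im S2 \<le> pi / (16 * real R) * (vec_norm2 R x)^2"
    using abs_Im_le_cmod[of S2] by (simp add: power2_eq_square)
  ultimately show ?thesis
    by simp
qed

lemma Im_hilbert_symbol_mult_ge:
  fixes Y :: real
  assumes "0 \<le> Y" "j < N" "j = 0 \<or> 2 * s < j \<Longrightarrow> Y \<le> \<delta>"
  shows "(pi - 4*pi*real s/real N) * Y - (if j = 0 \<or> 2 * s < j then 2*pi*\<delta> else 0)
    \<le> Im (hilbert_symbol N j) * Y"
proof (cases "j = 0 \<or> 2 * s < j")
  case True
  have "- pi \<le> Im (hilbert_symbol N j)"
    using assms by (simp add: Im_hilbert_symbol le_divide_eq algebra_simps)
  then have "- pi * Y \<le> Im (hilbert_symbol N j) * Y"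
    using assms(1) by (rule mult_right_mono)
  moreover have "(pi - 4*pi*real s/real N) * Y \<le> pi * Y"
    using assms by (intro mult_right_mono) simp_all
  moreover have "2*pi*Y \<le> 2*pi*\<delta>"
    using assms(3)[OF True] by simp
  ultimately have "(pi - 4*pi*real s/real N) * Y - 2*pi*\<delta> \<le> Im (hilbert_symbol N j) * Y"
    by linarith
  then show ?thesis
    using True by simp
next
  case False
  then have "2 * pi * real j / real N \<le> 4 * pi * real s / real N"
    by (intro divide_right_mono) auto
  moreover have "pi * (real N - 2 * real j) / real N = pi - 2 * pi * real j / real N"
    using assms by (simp add: field_simps)
  ultimately have "pi - 4*pi*real s/real N \<le> Im (hilbert_symbol N j)"
    using False by (simp add: Im_hilbert_symbol)
  then show ?thesis
    using False assms(1) by (simp add: mult_right_mono)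
qed

lemma T_lower_from_dft:
  assumes "R \<ge> 1" "N = 16*R^2"
    and off_peak: "\<And>j. j < N \<Longrightarrow> j = 0 \<or> 2 * s < j \<Longrightarrow> (cmod (dft N R x j))^2 \<le> \<delta>"
  shows "(pi - 4*pi*real s/real N - pi/(16*real R)) * (vec_norm2 R x)^2 - 2*pi*\<delta>
    \<le> vec_norm2 R (T_apply R x) * vec_norm2 R x"
proof -
  define X where "X j = (cmod (dft N R x j))^2" for j
  define t where "t = pi - 4*pi*real s/real N"
  have "R < N" "real N > 0"
    using assms by (simp_all add: power2_eq_square)
  have "0 \<le> \<delta>"
    using off_peak[of 0] \<open>real N > 0\<close> by (auto intro: order_trans[OF zero_le_power2])
  have "(\<Sum>j<N. if j = 0 \<or> 2 * s < j then 2*pi*\<delta> else 0) \<le> (\<Sum>j<N. 2*pi*\<delta>)"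
    using \<open>0 \<le> \<delta>\<close> by (intro sum_mono) auto
  moreover have "(\<Sum>j<N. X j) = real N * (vec_norm2 R x)^2"
    unfolding X_def vec_norm2_sq by (rule parseval_dft[OF \<open>R < N\<close>])
  ultimately have "t * (real N * (vec_norm2 R x)^2) - real N * (2*pi*\<delta>)
      \<le> (\<Sum>j<N. t * X j - (if j = 0 \<or> 2 * s < j then 2*pi*\<delta> else 0))"
    by (simp only: sum_subtractf sum_distrib_left[symmetric]) (simp add: mult_ac)
  also have "\<dots> \<le> (\<Sum>j<N. Im (hilbert_symbol N j) * X j)"
    unfolding t_def X_def by (intro sum_mono Im_hilbert_symbol_mult_ge off_peak) simp_all
  finally have "t * (vec_norm2 R x)^2 - 2*pi*\<delta> \<le> (1/real N) * (\<Sum>j<N. Im (hilbert_symbol N j) * X j)"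
    using \<open>real N > 0\<close> by (simp add: field_simps)
  then show ?thesis
    using T_quadratic_form_lower[OF assms(1,2), of x] by (simp add: X_def t_def algebra_simps)
qed

lemma norm_geometric_sum_le:
  fixes w :: complex
  assumes "w \<noteq> 1" "cmod w = 1"
  shows "cmod (\<Sum>l<M. w^l) \<le> 2 / cmod (w - 1)"
proof -
  have "cmod (\<Sum>l<M. w^l) = cmod (w^M - 1) / cmod (w - 1)"
    using assms by (simp add: geometric_sum norm_divide)
  also have "\<dots> \<le> 2 / cmod (w - 1)"
    using norm_triangle_ineq4[of "w^M" 1] assms by (intro divide_right_mono) (simp_all add: norm_power)
  finally show ?thesis .
qed

lemma sin_le_sin_between:
  fixes a y :: real
  assumes "0 \<le> a" "a \<le> y" "a \<le> pi - y"
  shows "sin a \<le> sin y"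
proof (cases "y \<le> pi/2")
  case True
  then show ?thesis
    using assms by (intro sin_monotone_2pi_le) auto
next
  case False
  then have "sin a \<le> sin (pi - y)"
    using assms by (intro sin_monotone_2pi_le) auto
  then show ?thesis
    by simp
qed

lemma abs_sin_off_peak_ge:
  assumes "1 \<le> s" "pi * real s / real N \<le> 1" "j < N" "j = 0 \<or> 2 * s < j"
  shows "5/6 * (pi * real s / real N) \<le> \<bar>sin (pi * (real j - real s) / real N)\<bar>"
proof -
  define a where "a = pi * real s / real N"
  define y where "y = pi * (real j - real s) / real N"
  have N: "real N > 0"
    using assms by simp
  have "0 < a" "a \<le> 1"
    using assms N by (simp_all add: a_def)
  then have sin_a: "5/6 * a \<le> sin a"
    by (intro sin_ge_five_sixths) simp_all
  show ?thesis
  proof (cases "j = 0")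
    case True
    then have "y = - a"
      by (simp add: a_def y_def)
    moreover have "0 \<le> sin a"
      using \<open>0 < a\<close> \<open>a \<le> 1\<close> pi_gt3 by (intro sin_ge_zero) simp_all
    ultimately show ?thesis
      using sin_a by (simp add: a_def y_def)
  next
    case False
    then have "a \<le> y"
      using assms N by (simp add: a_def y_def divide_right_mono)
    moreover have "a \<le> pi - y"
      using assms N by (simp add: a_def y_def field_simps)
    ultimately have "sin a \<le> sin y" "0 \<le> sin y"
      using \<open>0 < a\<close> by (auto intro: sin_le_sin_between sin_ge_zero)
    then show ?thesis
      using sin_a by (simp add: a_def y_def)
  qed
qed

lemma norm_geometric_sum_off_peak:
  assumes "M \<ge> 1" "1 \<le> s" "N \<le> s * M" "pi * real s / real N \<le> 1" "j < N" "j = 0 \<or> 2 * s < j"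
  shows "cmod (\<Sum>l<M. (cnj (unit_root N s) * unit_root N j)^l) \<le> real M / 2"
proof -
  define w where "w = cnj (unit_root N s) * unit_root N j"
  define c where "c = pi * real s / real N"
  have N: "real N > 0"
    using assms by simp
  have "w = cis (2 * (pi * (real j - real s) / real N))"
    unfolding w_def unit_root_def cis_cnj cis_mult
    by (rule arg_cong[where f=cis]) (use N in \<open>simp add: field_simps\<close>)
  then have "cmod (w - 1) = 2 * \<bar>sin (pi * (real j - real s) / real N)\<bar>" "cmod w = 1"
    by (simp only: norm_cis_double_minus_1, simp)
  then have dist: "5/3 * c \<le> cmod (w - 1)" "cmod w = 1"
    using abs_sin_off_peak_ge[OF assms(2,4,5,6)] by (simp_all add: c_def)
  have "0 < c"
    using assms N by (simp add: c_def)
  then have "0 < cmod (w - 1)"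
    using dist by linarith
  then have "w \<noteq> 1"
    by auto
  have "cmod (\<Sum>l<M. w^l) \<le> 2 / cmod (w - 1)"
    by (rule norm_geometric_sum_le[OF \<open>w \<noteq> 1\<close> dist(2)])
  also have "\<dots> \<le> 2 / (5/3 * c)"
    using dist \<open>0 < c\<close> \<open>0 < cmod (w - 1)\<close> by (intro divide_left_mono) simp_all
  also have "\<dots> \<le> real M / 2"
  proof -
    have "12 * real N \<le> 12 * (real s * real M)"
      using assms(3) of_nat_mono[OF assms(3)] by simp
    also have "\<dots> \<le> 5 * pi * (real s * real M)"
      using pi_gt3 by (intro mult_right_mono) simp_all
    finally show ?thesis
      using \<open>0 < c\<close> N by (simp add: c_def field_simps)
  qed
  finally show ?thesis
    by (simp add: w_def)
qed

lemma dft_coeff_poly: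
  assumes "degree p \<le> R" "coeff p 0 = 0"
  shows "dft N R (coeff p) j = poly p (unit_root N j)"
proof -
  have "poly p (unit_root N j) = (\<Sum>i\<le>R. coeff p i * unit_root N j ^ i)"
    unfolding poly_altdef by (rule sum.mono_neutral_left) (use assms in \<open>auto simp: coeff_eq_0\<close>)
  also have "\<dots> = (\<Sum>i=1..R. coeff p i * unit_root N j ^ i)"
    using assms(2) by (simp add: atMost_atLeast0 sum.atLeast_Suc_atMost)
  finally show ?thesis
    by (simp add: dft_def unit_root_power mult.commute)
qed

lemma exists_concentrated_vector:
  assumes "M \<ge> 1" "1 + (M - 1) * k \<le> R" "1 \<le> s" "N \<le> s * M" "pi * real s / real N \<le> 1"
  shows "\<exists>x. (cmod (dft N R x s))^2 = real M ^ (2*k) \<and>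
    (\<forall>j<N. j = 0 \<or> 2 * s < j \<longrightarrow> (cmod (dft N R x j))^2 \<le> (real M / 2) ^ (2*k))"
proof -
  define \<zeta> where "\<zeta> = cnj (unit_root N s)"
  define Q :: "complex poly" where "Q = (\<Sum>l<M. monom (\<zeta>^l) l)"
  define P where "P = [:0,1:] * Q^k"
  have "degree Q \<le> M - 1"
    unfolding Q_def by (rule degree_sum_le) (auto intro: order_trans[OF degree_monom_le])
  then have "degree P \<le> 1 + (M - 1) * k"
    unfolding P_def
    by (intro order_trans[OF degree_mult_le] add_mono order_trans[OF degree_power_le])
      (simp_all add: mult.commute)
  then have "degree P \<le> R"
    using assms(2) by linarith
  moreover have "coeff P 0 = 0"
    by (simp add: P_def coeff_mult_0)
  ultimately have dft_P: "cmod (dft N R (coeff P) j) = (cmod (\<Sum>l<M. (\<zeta> * unit_root N j)^l))^k" for j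
    by (simp add: dft_coeff_poly P_def Q_def poly_sum poly_monom power_mult_distrib norm_mult norm_power)
  have "\<zeta> * unit_root N s = 1"
    using complex_norm_square[of "unit_root N s"] by (simp add: \<zeta>_def mult.commute)
  then have "(cmod (dft N R (coeff P) s))^2 = real M ^ (2*k)"
    by (simp add: dft_P power_mult[symmetric] mult.commute)
  moreover have "(cmod (dft N R (coeff P) j))^2 \<le> (real M / 2) ^ (2*k)"
    if "j < N" "j = 0 \<or> 2 * s < j" for j
  proof -
    have "cmod (\<Sum>l<M. (\<zeta> * unit_root N j)^l) \<le> real M / 2"
      unfolding \<zeta>_def using norm_geometric_sum_off_peak[OF assms(1,3,4,5) that] .
    then have "cmod (dft N R (coeff P) j) \<le> (real M / 2) ^ k"
      unfolding dft_P by (rule power_mono) simp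
    then have "(cmod (dft N R (coeff P) j))^2 \<le> ((real M / 2) ^ k)^2"
      by (rule power_mono) simp
    then show ?thesis
      by (simp add: power_mult[symmetric] mult.commute)
  qed
  ultimately show ?thesis
    by blast
qed

lemma pi_minus_T_opnorm_le:
  assumes "R \<ge> 1" "N = 16*R^2" "M \<ge> 1" "1 + (M - 1) * k \<le> R"
    and "1 \<le> s" "N \<le> s * M" "pi * real s / real N \<le> 1"
  shows "pi - T_opnorm R \<le> 4*pi*real s/real N + 2*pi*real N/4^k + pi/(16*real R)"
proof -
  obtain x where peak: "(cmod (dft N R x s))^2 = real M ^ (2*k)"
    and off_peak: "\<And>j. j < N \<Longrightarrow> j = 0 \<or> 2 * s < j \<Longrightarrow> (cmod (dft N R x j))^2 \<le> (real M / 2) ^ (2*k)"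
    using exists_concentrated_vector[OF assms(3-7)] by blast
  define nx where "nx = vec_norm2 R x"
  have N: "real N > 0" "R < N"
    using assms by (simp_all add: power2_eq_square)
  have "real s < pi * real s"
    using assms(5) pi_gt3 by simp
  moreover have "pi * real s \<le> real N"
    using assms(7) N by (simp add: divide_le_eq)
  ultimately have "s < N"
    by simp
  then have "real M ^ (2*k) \<le> (\<Sum>j<N. (cmod (dft N R x j))^2)"
    unfolding peak[symmetric] by (intro member_le_sum) auto
  also have "\<dots> = real N * nx^2"
    unfolding nx_def vec_norm2_sq by (rule parseval_dft[OF \<open>R < N\<close>])
  finally have mass: "real M ^ (2*k) \<le> real N * nx^2" .
  moreover have "0 < real M ^ (2*k)"
    using assms(3) by simp
  ultimately have "0 < real N * nx^2"
    by linarith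
  then have "0 < nx^2"
    by (simp add: zero_less_mult_iff)
  then have "0 < nx"
    using vec_norm2_nonneg[of R x] by (simp add: nx_def)
  have "(real M / 2) ^ (2*k) = real M ^ (2*k) / 4^k"
    by (simp add: power_divide power_mult)
  also have "\<dots> \<le> real N * nx^2 / 4^k"
    using mass by (simp add: divide_right_mono)
  finally have small: "(real M / 2) ^ (2*k) \<le> real N * nx^2 / 4^k" .
  have "(pi - 4*pi*real s/real N - pi/(16*real R)) * nx^2 - 2*pi*(real N * nx^2 / 4^k)
      \<le> vec_norm2 R (T_apply R x) * nx"
    unfolding nx_def using order_trans[OF off_peak small[unfolded nx_def]]
    by (rule T_lower_from_dft[OF assms(1,2)])
  also have "\<dots> \<le> T_opnorm R * nx * nx"
    using T_apply_le_T_opnorm[OF assms(1), of x] \<open>0 < nx\<close> by (simp add: nx_def)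
  finally have "(pi - 4*pi*real s/real N - pi/(16*real R) - 2*pi*real N/4^k) * nx^2 \<le> T_opnorm R * nx^2"
    by (simp add: power2_eq_square algebra_simps)
  then show ?thesis
    using \<open>0 < nx\<close> by simp
qed

subsection \<open>Choice of the parameters\<close>

lemma exists_power_of_two_between:
  fixes R :: nat
  assumes "R \<ge> 1"
  obtains k where "R \<le> 2^k" "2^k < 2*R"
proof -
  define k where "k = (LEAST k. R \<le> 2^k)"
  have "R \<le> 2^k"
    unfolding k_def by (rule LeastI_ex, rule exI[of _ R]) (simp add: less_exp less_imp_le)
  moreover have "2^k < 2*R"
  proof (cases k)
    case 0
    then show ?thesis
      using assms by simp
  next
    case (Suc k')
    then have "\<not> R \<le> 2^k'"
      using not_less_Least[of k' "\<lambda>k. R \<le> 2^k"] unfolding k_def by simp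
    then show ?thesis
      using Suc by simp
  qed
  ultimately show ?thesis
    using that by blast
qed

lemma sixteen_mult_le_power_two: "7 \<le> k \<Longrightarrow> 16 * k \<le> (2::nat)^k"
proof (induction k rule: dec_induct)
  case base
  then show ?case
    by simp
next
  case (step n)
  moreover have "(2::nat)^4 \<le> 2^n"
    using step(1) by (intro power_increasing) auto
  ultimately show ?case
    by simp
qed

lemma exists_block_count:
  fixes R k :: nat
  assumes "0 < k" "4 * k < R"
  obtains M where "M \<ge> 5" "1 + (M - 1) * k \<le> R" "R \<le> M * k"
proof -
  define M where "M = (R - 1) div k + 1"
  have "(4 * k) div k \<le> (R - 1) div k"
    using assms by (intro div_le_mono) simp
  then have "M \<ge> 5"
    unfolding M_def using assms by simp
  moreover have "1 + (M - 1) * k \<le> R"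
  proof -
    have eq: "M - 1 = (R - 1) div k"
      by (simp add: M_def)
    have "(R - 1) div k * k \<le> R - 1"
      by (rule div_times_less_eq_dividend)
    then show ?thesis
      unfolding eq using assms by linarith
  qed
  moreover have "R \<le> M * k"
  proof -
    have "(R - 1) div k * k + (R - 1) mod k = R - 1" "(R - 1) mod k < k"
      "M * k = (R - 1) div k * k + k"
      using assms by (simp_all add: M_def algebra_simps)
    then show ?thesis
      by linarith
  qed
  ultimately show ?thesis
    using that by blast
qed

lemma exists_peak_frequency:
  fixes M N :: nat
  assumes "M \<ge> 5" "64 \<le> N"
  obtains s where "1 \<le> s" "N \<le> s * M" "real s / real N \<le> 1 / real M + 1 / real N"
    "pi * real s / real N \<le> 1"
proof -
  define s where "s = N div M + 1"
  have "N \<le> s * M"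
  proof -
    have "N div M * M + N mod M = N" "N mod M < M" "s * M = N div M * M + M"
      using assms by (simp_all add: s_def algebra_simps)
    then show ?thesis
      by linarith
  qed
  have "real (N div M) * real M \<le> real N"
    using div_times_less_eq_dividend[of N M] of_nat_mono by (metis of_nat_mult)
  then have s_over_N: "real s / real N \<le> 1 / real M + 1 / real N"
    using assms by (simp add: s_def field_simps)
  have "1 / real M \<le> 1/5" "1 / real N \<le> 1/64"
    using assms by (simp_all add: divide_left_mono)
  then have "real s / real N \<le> 69/320"
    using s_over_N by linarith
  have "pi * real s / real N = pi * (real s / real N)"
    by (rule times_divide_eq_right[symmetric])
  also have "\<dots> \<le> 4 * (69/320)"
    by (rule mult_mono) (use pi_less_4 \<open>real s / real N \<le> 69/320\<close> in auto)
  also have "\<dots> \<le> 1"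
    by simp
  finally show ?thesis
    using that[OF _ \<open>N \<le> s * M\<close> s_over_N] by (simp add: s_def)
qed

lemma off_peak_leakage_le:
  assumes "64 \<le> R" "R \<le> 2^k0"
  shows "2*pi*(16 * real R^2)/4^(2*k0) \<le> pi/(2*real R)"
proof -
  have "real R ^ 4 \<le> (2^k0)^4"
    using assms(2) by (intro power_mono) (simp_all flip: of_nat_le_iff)
  also have "\<dots> = (2::real)^(4*k0)"
    by (simp add: power_mult[symmetric] mult.commute)
  also have "\<dots> = 4^(2*k0)"
    by (simp add: power_mult)
  finally have "2*pi*(16 * real R^2)/4^(2*k0) \<le> 2*pi*(16 * real R^2) / real R ^ 4"
    using assms by (intro divide_left_mono) simp_all
  also have "\<dots> = pi/(2*real R) * (64 / real R)"
    using assms by (simp add: field_simps power2_eq_square power4_eq_xxxx)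
  also have "\<dots> \<le> pi/(2*real R)"
    using assms by (intro mult_left_le) simp_all
  finally show ?thesis .
qed

lemma pi_minus_T_opnorm_le_bracket:
  assumes "64 \<le> R" "R \<le> 2^k0" "8 * k0 < R"
  shows "pi - T_opnorm R \<le> (8*pi*real k0 + pi) / real R"
proof -
  define k where "k = 2 * k0"
  define N where "N = 16 * R^2"
  have real_R: "real R \<ge> 64"
    using assms by simp
  have real_N: "real N = 16 * (real R)^2"
    by (simp add: N_def)
  have "0 < k"
    using assms by (cases k0) (auto simp: k_def)
  then obtain M where M: "M \<ge> 5" "1 + (M - 1) * k \<le> R" "R \<le> M * k"
    using exists_block_count[of k R] assms by (auto simp: k_def)
  have "64 * 64 \<le> real R * real R"
    using real_R by (intro mult_mono) simp_all
  then have "64 \<le> N"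
    using real_N by (simp add: power2_eq_square)
  then obtain s where s: "1 \<le> s" "N \<le> s * M" "real s / real N \<le> 1 / real M + 1 / real N"
    "pi * real s / real N \<le> 1"
    using exists_peak_frequency[OF M(1)] by blast
  have "pi - T_opnorm R \<le> 4*pi*real s/real N + 2*pi*real N/4^k + pi/(16*real R)"
    using M s assms by (intro pi_minus_T_opnorm_le[OF _ N_def]) simp_all
  also have "4*pi*real s/real N \<le> 4*pi*real k/real R + pi/(4*real R)"
  proof -
    have "1 / real M \<le> real k / real R"
      using M(3) of_nat_mono[OF M(3)] M(1) real_R by (simp add: field_simps)
    moreover have "1 / real N \<le> 1 / (16 * real R)"
      using real_R by (simp add: real_N power2_eq_square field_simps)
    ultimately have "real s / real N \<le> real k / real R + 1 / (16 * real R)"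
      using s(3) by linarith
    then have "4*pi*(real s / real N) \<le> 4*pi*(real k / real R + 1 / (16 * real R))"
      by (intro mult_left_mono) simp_all
    then show ?thesis
      by (simp add: algebra_simps)
  qed
  also have "2*pi*real N/4^k \<le> pi/(2*real R)"
    unfolding real_N k_def by (rule off_peak_leakage_le[OF assms(1,2)])
  also have "4*pi*real k/real R + pi/(4*real R) + pi/(2*real R) + pi/(16*real R)
      \<le> (8*pi*real k0 + pi) / real R"
    using real_R by (simp add: k_def field_simps)
  finally show ?thesis
    by simp
qed
lemma exponent_less_log:
  assumes "R \<ge> 1" "2^k < 2*R"
  shows "2 * real k < 2 + 3 * ln (real R)"
proof -
  have "real (2^k) < real (2*R)"
    using assms(2) by (simp only: of_nat_less_iff)
  then have "ln ((2::real)^k) < ln (2 * real R)"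
    using assms(1) by (subst ln_less_cancel_iff) auto
  then have "(real k - 1) * ln 2 < ln (real R)"
    using assms(1) by (simp add: ln_realpow ln_mult algebra_simps)
  moreover have "(real k - 1) * (2/3) \<le> (real k - 1) * ln 2" if "k \<ge> 1"
    using ln2_ge_two_thirds that by (intro mult_left_mono) auto
  moreover have "0 \<le> ln (real R)"
    using assms(1) by simp
  ultimately have "(real k - 1) * (2/3) < ln (real R)"
    by (cases "k \<ge> 1") auto
  then show ?thesis
    by (simp add: algebra_simps)
qed

lemma pi_minus_T_opnorm_less_log_large:
  assumes "64 \<le> R"
  shows "pi - T_opnorm R < 400 * ln (real R) / real R"
proof -
  obtain k0 where k0: "R \<le> 2^k0" "2^k0 < 2*R"
    using exists_power_of_two_between[of R] assms by auto
  have "8 * k0 < R"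
  proof (rule ccontr)
    assume "\<not> 8 * k0 < R"
    then have "2^k0 < 16 * k0"
      using k0 by simp
    then have "k0 < 7"
      using sixteen_mult_le_power_two[of k0] by (cases "7 \<le> k0") auto
    then show False
      using \<open>\<not> 8 * k0 < R\<close> assms by simp
  qed
  have real_R: "real R \<ge> 64"
    using assms by simp
  have "exp 1 \<le> real R"
    using exp_le real_R by linarith
  then have "1 \<le> ln (real R)"
    using real_R by (simp add: ln_ge_iff)
  then have "8 * real k0 + 1 < 21 * ln (real R)"
    using exponent_less_log[OF _ k0(2)] assms by simp
  then have "pi * (8 * real k0 + 1) < pi * (21 * ln (real R))"
    by (rule mult_strict_left_mono) simp
  also have "\<dots> < 400 * ln (real R)"
    using pi_less_4 \<open>1 \<le> ln (real R)\<close> by simp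
  finally have "(8*pi*real k0 + pi) / real R < 400 * ln (real R) / real R"
    using real_R by (simp add: divide_strict_right_mono algebra_simps)
  then show ?thesis
    using pi_minus_T_opnorm_le_bracket[OF assms k0(1) \<open>8 * k0 < R\<close>] by linarith
qed
lemma pi_minus_T_opnorm_less_log:
  assumes "R \<ge> 2"
  shows "pi - T_opnorm R < 400 * ln (real R) / real R"
proof (cases "64 \<le> R")
  case True
  then show ?thesis
    by (rule pi_minus_T_opnorm_less_log_large)
next
  case False
  have "ln 2 \<le> ln (real R)"
    using assms by (subst ln_le_cancel_iff) auto
  then have "2/3 \<le> ln (real R)"
    using ln2_ge_two_thirds by linarith
  then have "4 * real R < 400 * ln (real R)"
    using False by simp
  then have "4 < 400 * ln (real R) / real R"
    using assms by (simp add: less_divide_eq)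
  then show ?thesis
    using T_opnorm_nonneg[of R] assms pi_less_4 by simp
qed

theorem mainTheorem13:
  shows "\<exists>a b :: real. a > 0 \<and> b > 0 \<and>
    (\<forall>R::nat. R \<ge> 2 \<longrightarrow>
       a / real R < pi - T_opnorm R \<and> pi - T_opnorm R < b * ln (real R) / real R)"
proof -
  have "pi/32 / real R < pi - T_opnorm R" if "R \<ge> 2" for R :: nat
  proof -
    have "pi/32 / real R < pi/(16*real R)"
      using that by (simp add: field_simps)
    then show ?thesis
      using pi_minus_T_opnorm_ge[of R] that by simp
  qed
  then show ?thesis
    using pi_minus_T_opnorm_less_log by (intro exI[of _ "pi/32"] exI[of _ 400]) auto
qed

end
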